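(* Let $R$ be a unique factorization domain. Let $1\leqslant n\leqslant m$, let $s_1,\dots,s_n\in\operatorname{Sqf} R$ with $s_i\mid s_{i+1}$ for $i=1,\dots,n-1$, and let $t_1,\dots,t_m\in\operatorname{Sqf} R$ with $t_i\mid t_{i+1}$ for $i=1,\dots,m-1$. If $s_1s_2\cdots s_n=t_1t_2\cdots t_m$, then $s_i\sim t_{i+m-n}$ for $i=1,\dots,n$, and, if $m>n$, then $t_i\in R^{\ast}$ for $i=1,\dots,m-n$.
   Context: $R^{\ast}$ denotes the set of invertible elements of $R$; $a\sim b$ means $a$ and $b$ are associated; $a\mid b$ means $a$ divides $b$. An element $a\in R$ is square-free if it cannot be written as $a=b^2c$ with $b\in R\setminus R^{\ast}$ and $c\in R$; $\operatorname{Sqf} R$ denotes the set of square-free elements of $R$. *)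

theory Defs
  imports "HOL-Computational_Algebra.Factorial_Ring"
begin

definition sqf :: "'a::algebraic_semidom \<Rightarrow> bool" where
  "sqf a \<longleftrightarrow> \<not> (\<exists>b c. \<not> is_unit b \<and> a = b^2 * c)"

definition assoc :: "'a::algebraic_semidom \<Rightarrow> 'a \<Rightarrow> bool" where
  "assoc a b \<longleftrightarrow> a dvd b \<and> b dvd a"

end

theory Submission
  imports Defs
begin

text \<open>Fix a prime \<open>p\<close>. Along a divisibility chain of square-free elements the multiplicities
of \<open>p\<close> form a non-decreasing 0/1 sequence, i.e. some zeros followed by ones, so the sequence is
determined by its length and its sum. The sum is the multiplicity of \<open>p\<close> in the common
product, hence both chains carry the same ones, right-aligned. Equal multiplicities at every
prime give association, and zero multiplicity everywhere gives a unit.\<close>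

lemma le_if_steps_le:
  fixes f :: "nat \<Rightarrow> nat"
  assumes steps: "\<forall>i\<in>{1..<n}. f i \<le> f (i + 1)" and "1 \<le> i" "i \<le> j" "j \<le> n"
  shows "f i \<le> f j"
  using assms(3,4)
proof (induction j rule: dec_induct)
  case (step k)
  then have "f k \<le> f (k + 1)" using steps \<open>1 \<le> i\<close> by auto
  with step show ?case by simp
qed simp

lemma zero_one_steps_eq_if_sum:
  fixes f :: "nat \<Rightarrow> nat"
  assumes le1: "\<forall>i\<in>{1..n}. f i \<le> 1" and steps: "\<forall>i\<in>{1..<n}. f i \<le> f (i + 1)"
    and i: "i \<in> {1..n}"
  shows "f i = (if n < i + (\<Sum>j=1..n. f j) then 1 else 0)"
proof (cases "f i = 1")
  case True
  then have "\<forall>j\<in>{i..n}. f j = 1"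
    using le_if_steps_le[OF steps] i le1 by (metis atLeastAtMost_iff le_antisym order_trans)
  then have "(\<Sum>j=i..n. f j) = n + 1 - i" by simp
  moreover have "(\<Sum>j=i..n. f j) \<le> (\<Sum>j=1..n. f j)"
    using i by (intro sum_mono2) auto
  ultimately show ?thesis using True i by auto
next
  case False
  then have "f i = 0" using le1 i by force
  then have zeros: "\<forall>j\<in>{1..i}. f j = 0"
    using le_if_steps_le[OF steps] i by (metis atLeastAtMost_iff le0 le_antisym)
  have split: "{1..n} = {1..i} \<union> {i<..n}" using i by auto
  have "(\<Sum>j=1..n. f j) = (\<Sum>j=1..i. f j) + (\<Sum>j\<in>{i<..n}. f j)"
    unfolding split by (rule sum.union_disjoint) auto
  also have "\<dots> = (\<Sum>j\<in>{i<..n}. f j)" using zeros by simp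
  also have "\<dots> \<le> card {i<..n}" using le1 sum_bounded_above[of "{i<..n}" f 1] by auto
  finally show ?thesis using False \<open>f i = 0\<close> i by auto
qed

lemma zero_one_steps_right_aligned:
  fixes f g :: "nat \<Rightarrow> nat"
  assumes "n \<le> m"
    and f_le1: "\<forall>i\<in>{1..n}. f i \<le> 1" and f_steps: "\<forall>i\<in>{1..<n}. f i \<le> f (i + 1)"
    and g_le1: "\<forall>i\<in>{1..m}. g i \<le> 1" and g_steps: "\<forall>i\<in>{1..<m}. g i \<le> g (i + 1)"
    and sum_eq: "(\<Sum>j=1..n. f j) = (\<Sum>j=1..m. g j)"
  shows "(\<forall>i\<in>{1..n}. f i = g (i + m - n)) \<and> (\<forall>i\<in>{1..m - n}. g i = 0)"
proof -
  define k where "k = (\<Sum>j=1..m. g j)"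
  have "k \<le> n"
    using f_le1 sum_bounded_above[of "{1..n}" f 1] sum_eq unfolding k_def by auto
  have g_eq: "g i = (if m < i + k then 1 else 0)" if "i \<in> {1..m}" for i
    using zero_one_steps_eq_if_sum[OF g_le1 g_steps that] unfolding k_def .
  have f_eq: "f i = (if n < i + k then 1 else 0)" if "i \<in> {1..n}" for i
    using zero_one_steps_eq_if_sum[OF f_le1 f_steps that] sum_eq unfolding k_def by simp
  have "f i = g (i + m - n)" if "i \<in> {1..n}" for i
  proof -
    have "i + m - n \<in> {1..m}" "(n < i + k) = (m < i + m - n + k)"
      using that \<open>n \<le> m\<close> by auto
    then show ?thesis using f_eq[OF that] g_eq by presburger
  qed
  moreover have "g i = 0" if "i \<in> {1..m - n}" for i
    using that g_eq[of i] \<open>k \<le> n\<close> by auto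
  ultimately show ?thesis by blast
qed

lemma sqf_nonzero: "sqf a \<Longrightarrow> a \<noteq> 0"
  unfolding sqf_def by (metis mult_zero_right not_is_unit_0)

lemma multiplicity_sqf_le_1:
  assumes "sqf a" "prime p"
  shows "multiplicity p a \<le> 1"
proof (rule ccontr)
  assume "\<not> ?thesis"
  then have "p ^ 2 dvd a" by (intro multiplicity_dvd') simp
  then obtain c where "a = p ^ 2 * c" by (auto elim: dvdE)
  moreover have "\<not> is_unit p" using \<open>prime p\<close> by (simp add: not_prime_unit)
  ultimately show False using \<open>sqf a\<close> unfolding sqf_def by blast
qed

lemma assoc_if_multiplicity_eq:
  fixes x y :: "'a::factorial_semiring"
  assumes "x \<noteq> 0" "y \<noteq> 0" "\<And>p. prime p \<Longrightarrow> multiplicity p x = multiplicity p y"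
  shows "assoc x y"
  unfolding assoc_def using assms by (simp add: multiplicity_le_imp_dvd)

lemma is_unit_if_multiplicity_zero:
  fixes x :: "'a::factorial_semiring"
  assumes "x \<noteq> 0" "\<And>p. prime p \<Longrightarrow> multiplicity p x = 0"
  shows "is_unit x"
  using assms multiplicity_le_imp_dvd[of x 1] by simp

lemma multiplicity_sqf_chain:
  fixes s :: "nat \<Rightarrow> 'a::factorial_semiring"
  assumes sqf: "\<forall>i\<in>{1..n}. sqf (s i)" and chain: "\<forall>i\<in>{1..<n}. s i dvd s (i + 1)"
    and "prime p"
  shows "\<forall>i\<in>{1..n}. multiplicity p (s i) \<le> 1"
    and "\<forall>i\<in>{1..<n}. multiplicity p (s i) \<le> multiplicity p (s (i + 1))"
    and "multiplicity p (\<Prod>i=1..n. s i) = (\<Sum>i=1..n. multiplicity p (s i))"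
proof -
  have nonzero: "\<forall>i\<in>{1..n}. s i \<noteq> 0" using sqf sqf_nonzero by blast
  show "\<forall>i\<in>{1..n}. multiplicity p (s i) \<le> 1"
    using sqf \<open>prime p\<close> multiplicity_sqf_le_1 by blast
  show "\<forall>i\<in>{1..<n}. multiplicity p (s i) \<le> multiplicity p (s (i + 1))"
    using chain nonzero by (auto intro!: dvd_imp_multiplicity_le)
  show "multiplicity p (\<Prod>i=1..n. s i) = (\<Sum>i=1..n. multiplicity p (s i))"
    using nonzero \<open>prime p\<close> by (intro prime_elem_multiplicity_prod_distrib) auto
qed

theorem proposition2:
  fixes s t :: "nat \<Rightarrow> 'a::{factorial_semiring,idom}" and n m :: nat
  assumes "1 \<le> n" and "n \<le> m"
    and "\<forall>i\<in>{1..n}. sqf (s i)"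
    and "\<forall>i\<in>{1..<n}. s i dvd s (i + 1)"
    and "\<forall>i\<in>{1..m}. sqf (t i)"
    and "\<forall>i\<in>{1..<m}. t i dvd t (i + 1)"
    and "(\<Prod>i=1..n. s i) = (\<Prod>i=1..m. t i)"
  shows "(\<forall>i\<in>{1..n}. assoc (s i) (t (i + m - n)))
       \<and> (m > n \<longrightarrow> (\<forall>i\<in>{1..m - n}. is_unit (t i)))"
proof -
  have aligned: "(\<forall>i\<in>{1..n}. multiplicity p (s i) = multiplicity p (t (i + m - n)))
      \<and> (\<forall>i\<in>{1..m - n}. multiplicity p (t i) = 0)" if "prime p" for p
  proof (rule zero_one_steps_right_aligned[OF \<open>n \<le> m\<close>])
    note s_mult = multiplicity_sqf_chain[OF assms(3,4) that]
    note t_mult = multiplicity_sqf_chain[OF assms(5,6) that]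
    show "(\<Sum>i=1..n. multiplicity p (s i)) = (\<Sum>i=1..m. multiplicity p (t i))"
      using s_mult(3) t_mult(3) assms(7) by simp
  qed (use multiplicity_sqf_chain[OF assms(3,4) that] multiplicity_sqf_chain[OF assms(5,6) that]
       in blast)+
  have "assoc (s i) (t (i + m - n))" if "i \<in> {1..n}" for i
  proof (rule assoc_if_multiplicity_eq)
    have "i + m - n \<in> {1..m}" using that \<open>n \<le> m\<close> by auto
    then have "sqf (s i)" "sqf (t (i + m - n))" using that assms(3,5) by auto
    then show "s i \<noteq> 0" "t (i + m - n) \<noteq> 0" by (simp_all add: sqf_nonzero)
  qed (use that aligned in blast)
  moreover have "is_unit (t i)" if "i \<in> {1..m - n}" for i
  proof (rule is_unit_if_multiplicity_zero)
    have "sqf (t i)" using that assms(5) by auto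
    then show "t i \<noteq> 0" by (rule sqf_nonzero)
  qed (use that aligned in blast)
  ultimately show ?thesis by blast
qed

end
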